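(* Let $N\ge1$, $K_{des}>0$, and let $\Omega_P,\Omega_S\subset[0,\pi]$ be disjoint nonempty closed sets, each a finite union of closed intervals of positive length. With $\Delta_{P,res}(K)$ as defined below, and $$\Delta_P(K)=\frac{8K_{des}^2K}{K^2+16K_{des}^4-8K_{des}^2},$$ there exists exactly one $K\ge 4K_{des}(K_{des}+1)$ such that $\Delta_{P,res}(K)=\Delta_P(K)$. Moreover, on $[4K_{des}(K_{des}+1),\infty)$ one has $\Delta_{P,res}(K)<\Delta_P(K)$ for $K$ smaller than this value and $\Delta_{P,res}(K)>\Delta_P(K)$ for $K$ larger than it.
   Context: Let $D(\omega)=1$ on $\Omega_P$ and $D(\omega)=0$ on $\Omega_S$. For $K>0$ let $W_K(\omega)=1$ on $\Omega_P$ and $W_K(\omega)=K$ on $\Omega_S$, and $$\Delta_{P,res}(K)=\min_{c_0,\dots,c_N\in\mathbb{R}}\ \max_{\omega\in\Omega_P\cup\Omega_S}\Bigl|W_K(\omega)\Bigl(\sum_{n=0}^N c_n\cos(n\omega)-D(\omega)\Bigr)\Bigr|,$$ the minimax weighted error of the optimal even-symmetric (zero-phase) sequence of order $2N$ approximating $D$ with weight $W_K$. *)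

theory Defs
  imports "HOL-Analysis.Analysis"
begin

definition band_set :: "real set \<Rightarrow> bool" where
  "band_set \<Omega> \<longleftrightarrow> \<Omega> \<subseteq> {0..pi} \<and>
     (\<exists>I :: (real \<times> real) set. finite I \<and> I \<noteq> {} \<and> (\<forall>(a,b)\<in>I. a < b) \<and>
        \<Omega> = (\<Union>(a,b)\<in>I. {a..b}))"

definition Dresp :: "real set \<Rightarrow> real \<Rightarrow> real" where
  "Dresp \<Omega>P \<omega> = (if \<omega> \<in> \<Omega>P then 1 else 0)"

definition Wweight :: "real set \<Rightarrow> real \<Rightarrow> real \<Rightarrow> real" where
  "Wweight \<Omega>P K \<omega> = (if \<omega> \<in> \<Omega>P then 1 else K)"

definition DeltaPres :: "nat \<Rightarrow> real set \<Rightarrow> real set \<Rightarrow> real \<Rightarrow> real" where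
  "DeltaPres N \<Omega>P \<Omega>S K =
     (INF c :: nat \<Rightarrow> real. SUP \<omega> \<in> \<Omega>P \<union> \<Omega>S.
        \<bar>Wweight \<Omega>P K \<omega> * ((\<Sum>n\<le>N. c n * cos (real n * \<omega>)) - Dresp \<Omega>P \<omega>)\<bar>)"

definition DeltaP :: "real \<Rightarrow> real \<Rightarrow> real" where
  "DeltaP Kdes K = 8 * Kdes^2 * K / (K^2 + 16 * Kdes^4 - 8 * Kdes^2)"

end

theory Submission
  imports Defs "HOL-Computational_Algebra.Polynomial" "HOL-Real_Asymp.Real_Asymp"
begin

text \<open>The minimax error \<open>DeltaPres\<close> is nondecreasing in \<open>K\<close>, while \<open>DeltaPres K / K\<close> is
  nonincreasing (scale the weight); together with \<open>DeltaPres \<le> 1\<close> this makes it Lipschitz on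
  every half-line \<open>[k, \<infinity>)\<close> with \<open>k > 0\<close>. The constant filter \<open>1 / (K + 1)\<close> gives
  \<open>DeltaPres K \<le> K / (K + 1)\<close>, which equals \<open>DeltaP\<close> at \<open>K = 4 Kdes (Kdes + 1)\<close>. Conversely
  \<open>DeltaPres\<close> is bounded away from zero for \<open>K \<ge> 1\<close>: a cosine polynomial of degree \<open>N\<close> is an
  algebraic polynomial in \<open>cos \<omega>\<close>, and Lagrange interpolation at \<open>N + 1\<close> passband nodes bounds
  its value at a stopband point, so it cannot be close to 1 on the passband and close to 0
  there. Since \<open>DeltaP\<close> decreases strictly to 0 beyond the threshold, the intermediate value
  theorem yields a crossing, and monotonicity makes it unique and fixes the signs.\<close>

fun chebyshev :: "nat \<Rightarrow> real poly" where
  "chebyshev 0 = 1"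
| "chebyshev (Suc 0) = [:0, 1:]"
| "chebyshev (Suc (Suc n)) = [:0, 2:] * chebyshev (Suc n) - chebyshev n"

lemma degree_chebyshev_le: "degree (chebyshev n) \<le> n"
proof (induction n rule: chebyshev.induct)
  case (3 n)
  have "degree ([:0, 2:] * chebyshev (Suc n)) \<le> Suc (Suc n)"
    using 3(1) degree_mult_le[of "[:0, 2::real:]" "chebyshev (Suc n)"] by simp
  moreover have "degree (chebyshev n) \<le> Suc (Suc n)"
    using 3(2) by simp
  ultimately show ?case
    by (simp add: degree_diff_le)
qed auto

lemma poly_chebyshev_cos: "poly (chebyshev n) (cos x) = cos (real n * x)"
proof (induction n rule: chebyshev.induct)
  case (3 n)
  have "cos (real (Suc (Suc n)) * x) + cos (real n * x) = 2 * cos x * cos (real (Suc n) * x)"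
    using cos_add[of "real (Suc n) * x" x] cos_diff[of "real (Suc n) * x" x]
    by (simp add: algebra_simps)
  with 3 show ?case
    by simp
qed auto

lemma cos_sum_eq_poly_cos:
  obtains Q :: "real poly"
  where "degree Q \<le> N" "\<And>\<omega>. poly Q (cos \<omega>) = (\<Sum>n\<le>N. c n * cos (real n * \<omega>))"
proof
  show "degree (\<Sum>n\<le>N. smult (c n) (chebyshev n)) \<le> N"
    by (intro degree_sum_le)
      (auto intro: order.trans[OF degree_smult_le] order.trans[OF degree_chebyshev_le])
  show "poly (\<Sum>n\<le>N. smult (c n) (chebyshev n)) (cos \<omega>) = (\<Sum>n\<le>N. c n * cos (real n * \<omega>))"
    for \<omega>
    by (simp add: poly_sum poly_chebyshev_cos)
qed

definition lagrange_basis :: "'a::field set \<Rightarrow> 'a \<Rightarrow> 'a \<Rightarrow> 'a" where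
  "lagrange_basis T t x = (\<Prod>u\<in>T - {t}. x - u) / (\<Prod>u\<in>T - {t}. t - u)"

lemma lagrange_basis_node:
  assumes "finite T" "t \<in> T" "y \<in> T"
  shows "lagrange_basis T t y = (if t = y then 1 else 0)"
  using assms by (auto simp: lagrange_basis_def intro: prod_zero)

lemma poly_eq_lagrange_interpolation:
  fixes Q :: "'a::field poly"
  assumes T: "finite T" "card T = Suc N" and deg: "degree Q \<le> N"
  shows "poly Q x = (\<Sum>t\<in>T. poly Q t * lagrange_basis T t x)"
proof -
  define L where "L t = smult (1 / (\<Prod>u\<in>T - {t}. t - u)) (\<Prod>u\<in>T - {t}. [:-u, 1:])" for t
  define R where "R = Q - (\<Sum>t\<in>T. smult (poly Q t) (L t))"
  have poly_L: "poly (L t) y = lagrange_basis T t y" for t y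
    by (simp add: L_def lagrange_basis_def poly_prod)
  have "degree (L t) \<le> N" if "t \<in> T" for t
  proof -
    have "degree (\<Prod>u\<in>T - {t}. [:-u, 1:]) \<le> (\<Sum>u\<in>T - {t}. degree [:-u, 1::'a:])"
      using degree_prod_sum_le[of "T - {t}" "\<lambda>u. [:-u, 1::'a:]"] T by (simp add: o_def)
    also have "\<dots> = N"
      using T that by simp
    finally show ?thesis
      by (simp add: L_def)
  qed
  then have deg_R: "degree R \<le> N"
    unfolding R_def
    by (intro order.trans[OF degree_diff_le_max] max.boundedI deg degree_sum_le T
        order.trans[OF degree_smult_le]) auto
  have roots: "T \<subseteq> {y. poly R y = 0}"
  proof
    fix y assume y: "y \<in> T"
    have "(\<Sum>t\<in>T. poly Q t * poly (L t) y) = poly Q y * poly (L y) y"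
      using T y by (intro sum.remove[THEN trans]) (auto simp: poly_L lagrange_basis_node intro!: sum.neutral)
    also have "\<dots> = poly Q y"
      using T y by (simp add: poly_L lagrange_basis_node)
    finally have "(\<Sum>t\<in>T. poly Q t * poly (L t) y) = poly Q y" .
    then show "y \<in> {y. poly R y = 0}"
      by (simp add: R_def poly_sum)
  qed
  have "R = 0"
  proof (rule ccontr)
    assume "R \<noteq> 0"
    then have "card T \<le> card {y. poly R y = 0}"
      by (intro card_mono poly_roots_finite roots)
    also have "\<dots> \<le> N"
      using card_poly_roots_bound[OF \<open>R \<noteq> 0\<close>] deg_R by linarith
    finally show False
      using T by simp
  qed
  then have "poly R x = 0"
    by simp
  then show ?thesis
    by (simp add: R_def poly_sum poly_L)
qed

lemma abs_poly_le_lagrange_bound: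
  fixes Q :: "real poly"
  assumes "finite T" "card T = Suc N" "degree Q \<le> N" and bound: "\<And>t. t \<in> T \<Longrightarrow> \<bar>poly Q t\<bar> \<le> E"
  shows "\<bar>poly Q x\<bar> \<le> E * (\<Sum>t\<in>T. \<bar>lagrange_basis T t x\<bar>)"
proof -
  have "\<bar>poly Q x\<bar> = \<bar>\<Sum>t\<in>T. poly Q t * lagrange_basis T t x\<bar>"
    using poly_eq_lagrange_interpolation[OF assms(1-3), of x] by simp
  also have "\<dots> \<le> (\<Sum>t\<in>T. \<bar>poly Q t * lagrange_basis T t x\<bar>)"
    by (rule sum_abs)
  also have "\<dots> \<le> (\<Sum>t\<in>T. E * \<bar>lagrange_basis T t x\<bar>)"
    unfolding abs_mult by (intro sum_mono mult_right_mono bound) simp_all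
  finally show ?thesis
    by (simp add: sum_distrib_left)
qed

lemma band_set_contains_interval:
  assumes "band_set \<Omega>"
  obtains a b where "a < b" "{a..b} \<subseteq> \<Omega>"
  using assms unfolding band_set_def by fast

lemma band_set_nonempty:
  assumes "band_set \<Omega>"
  shows "\<Omega> \<noteq> {}"
proof -
  obtain a b where "a < b" "{a..b} \<subseteq> \<Omega>"
    using band_set_contains_interval[OF assms] .
  then show ?thesis
    by auto
qed

lemma cos_image_contains_card_subset:
  assumes "a < b" "{a..b} \<subseteq> {0..pi}"
  obtains T where "finite T" "card T = n" "T \<subseteq> cos ` {a..b}"
proof -
  have "inj_on cos {a..b}"
    using assms(2) by (intro inj_onI) (auto intro: cos_inj_pi)
  then have "infinite (cos ` {a..b})"
    using finite_image_iff infinite_Icc[OF assms(1)] by blast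
  then show ?thesis
    using infinite_arbitrarily_large that by blast
qed

definition weighted_error :: "nat \<Rightarrow> real set \<Rightarrow> real \<Rightarrow> (nat \<Rightarrow> real) \<Rightarrow> real \<Rightarrow> real" where
  "weighted_error N P K c \<omega> =
     \<bar>Wweight P K \<omega> * ((\<Sum>n\<le>N. c n * cos (real n * \<omega>)) - Dresp P \<omega>)\<bar>"

definition max_weighted_error ::
    "nat \<Rightarrow> real set \<Rightarrow> real set \<Rightarrow> real \<Rightarrow> (nat \<Rightarrow> real) \<Rightarrow> real" where
  "max_weighted_error N P S K c = (SUP \<omega>\<in>P \<union> S. weighted_error N P K c \<omega>)"

lemma DeltaPres_eq_INF_max_weighted_error:
  "DeltaPres N P S K = (INF c. max_weighted_error N P S K c)"
  unfolding DeltaPres_def max_weighted_error_def weighted_error_def ..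

lemma abs_cos_sum_le: "\<bar>\<Sum>n\<le>N. c n * cos (real n * \<omega>)\<bar> \<le> (\<Sum>n\<le>N. \<bar>c n\<bar>)"
proof -
  have "\<bar>\<Sum>n\<le>N. c n * cos (real n * \<omega>)\<bar> \<le> (\<Sum>n\<le>N. \<bar>c n * cos (real n * \<omega>)\<bar>)"
    by (rule sum_abs)
  also have "\<dots> \<le> (\<Sum>n\<le>N. \<bar>c n\<bar>)"
    by (intro sum_mono) (simp add: abs_mult mult_left_le)
  finally show ?thesis .
qed

lemma weighted_error_le: "weighted_error N P K c \<omega> \<le> max 1 \<bar>K\<bar> * ((\<Sum>n\<le>N. \<bar>c n\<bar>) + 1)"
proof -
  have "\<bar>Wweight P K \<omega>\<bar> \<le> max 1 \<bar>K\<bar>"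
    by (simp add: Wweight_def)
  moreover have "\<bar>(\<Sum>n\<le>N. c n * cos (real n * \<omega>)) - Dresp P \<omega>\<bar> \<le> (\<Sum>n\<le>N. \<bar>c n\<bar>) + 1"
    using abs_cos_sum_le[where N = N and c = c and \<omega> = \<omega>] by (auto simp: Dresp_def)
  ultimately show ?thesis
    unfolding weighted_error_def abs_mult by (rule mult_mono) auto
qed

lemma bdd_above_weighted_error: "bdd_above (weighted_error N P K c ` A)"
  using weighted_error_le by (intro bdd_aboveI2) blast

lemma weighted_error_le_max:
  "\<omega> \<in> P \<union> S \<Longrightarrow> weighted_error N P K c \<omega> \<le> max_weighted_error N P S K c"
  unfolding max_weighted_error_def by (rule cSUP_upper[OF _ bdd_above_weighted_error])

lemma max_weighted_error_nonneg: "P \<union> S \<noteq> {} \<Longrightarrow> 0 \<le> max_weighted_error N P S K c"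
  using weighted_error_le_max[of _ P S N K c] by (force simp: weighted_error_def)

lemma bdd_below_max_weighted_error:
  "P \<union> S \<noteq> {} \<Longrightarrow> bdd_below (range (max_weighted_error N P S K))"
  using max_weighted_error_nonneg by (intro bdd_belowI2) blast

lemma DeltaPres_le_max_weighted_error:
  "P \<union> S \<noteq> {} \<Longrightarrow> DeltaPres N P S K \<le> max_weighted_error N P S K c"
  unfolding DeltaPres_eq_INF_max_weighted_error
  by (rule cINF_lower[OF bdd_below_max_weighted_error]) auto

lemma DeltaPres_mono:
  assumes ne: "P \<union> S \<noteq> {}" and "0 \<le> K" "K \<le> K'"
  shows "DeltaPres N P S K \<le> DeltaPres N P S K'"
proof -
  have "weighted_error N P K c \<omega> \<le> weighted_error N P K' c \<omega>" for c \<omega>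
    unfolding weighted_error_def abs_mult
    using assms by (intro mult_right_mono) (auto simp: Wweight_def)
  then have "max_weighted_error N P S K c \<le> max_weighted_error N P S K' c" for c
    unfolding max_weighted_error_def by (intro cSUP_mono ne bdd_above_weighted_error) blast
  then show ?thesis
    unfolding DeltaPres_eq_INF_max_weighted_error
    by (intro cINF_mono bdd_below_max_weighted_error ne) auto
qed

text \<open>Multiplying the weight by \<open>K' / K \<ge> 1\<close> multiplies every error by at most that factor.\<close>
lemma DeltaPres_le_scaled:
  assumes ne: "P \<union> S \<noteq> {}" and K: "0 < K" "K \<le> K'"
  shows "DeltaPres N P S K' \<le> K' / K * DeltaPres N P S K"
proof -
  have r: "1 \<le> K' / K"
    using K by simp
  have "max_weighted_error N P S K' c \<le> K' / K * max_weighted_error N P S K c" for c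
    unfolding max_weighted_error_def[of N P S K']
  proof (intro cSUP_least ne)
    fix \<omega> assume \<omega>: "\<omega> \<in> P \<union> S"
    have "\<bar>Wweight P K' \<omega>\<bar> \<le> K' / K * \<bar>Wweight P K \<omega>\<bar>"
      using K r by (auto simp: Wweight_def)
    then have "weighted_error N P K' c \<omega> \<le> K' / K * weighted_error N P K c \<omega>"
      unfolding weighted_error_def abs_mult mult.assoc[symmetric] by (rule mult_right_mono) simp
    also have "\<dots> \<le> K' / K * max_weighted_error N P S K c"
      using r \<omega> by (intro mult_left_mono weighted_error_le_max) auto
    finally show "weighted_error N P K' c \<omega> \<le> K' / K * max_weighted_error N P S K c" .
  qed
  then have "DeltaPres N P S K' \<le> K' / K * max_weighted_error N P S K c" for c
    using order.trans[OF DeltaPres_le_max_weighted_error[OF ne]] by blast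
  then have "DeltaPres N P S K' * (K / K') \<le> max_weighted_error N P S K c" for c
    using K by (simp add: field_simps)
  then have "DeltaPres N P S K' * (K / K') \<le> DeltaPres N P S K"
    unfolding DeltaPres_eq_INF_max_weighted_error[of N P S K] by (intro cINF_greatest) auto
  then show ?thesis
    using K by (simp add: field_simps)
qed

text \<open>Witnessed by the constant filter with value \<open>1 / (K + 1)\<close>.\<close>
lemma DeltaPres_le_const_filter:
  assumes ne: "P \<union> S \<noteq> {}" and K: "0 \<le> K"
  shows "DeltaPres N P S K \<le> K / (K + 1)"
proof -
  define c where "c n = (if n = 0 then 1 / (K + 1) else 0)" for n :: nat
  have "(\<Sum>n\<le>N. c n * cos (real n * \<omega>)) = (\<Sum>n\<le>N. if n = 0 then 1 / (K + 1) else 0)" for \<omega>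
    by (intro sum.cong) (auto simp: c_def)
  then have sum_c: "(\<Sum>n\<le>N. c n * cos (real n * \<omega>)) = 1 / (K + 1)" for \<omega>
    by simp
  have "weighted_error N P K c \<omega> = K / (K + 1)" for \<omega>
  proof (cases "\<omega> \<in> P")
    case True
    have "1 / (K + 1) - 1 = - (K / (K + 1))"
      using K by (simp add: field_simps)
    with True K show ?thesis
      by (simp add: weighted_error_def Wweight_def Dresp_def sum_c)
  next
    case False
    with K show ?thesis
      by (simp add: weighted_error_def Wweight_def Dresp_def sum_c)
  qed
  then have "max_weighted_error N P S K c \<le> K / (K + 1)"
    unfolding max_weighted_error_def by (intro cSUP_least ne) simp
  then show ?thesis
    using DeltaPres_le_max_weighted_error[OF ne, of N K c] by linarith
qed

lemma max_weighted_error_lower_bound: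
  fixes T :: "real set"
  assumes K: "1 \<le> K" and s: "s \<in> S" "s \<notin> P"
    and T: "finite T" "card T = Suc N" "T \<subseteq> cos ` P"
  shows "1 \<le> max_weighted_error N P S K c * (1 + (\<Sum>t\<in>T. \<bar>lagrange_basis T t (cos s)\<bar>))"
proof -
  define E where "E = max_weighted_error N P S K c"
  obtain Q where deg: "degree Q \<le> N"
    and Q: "\<And>\<omega>. poly Q (cos \<omega>) = (\<Sum>n\<le>N. c n * cos (real n * \<omega>))"
    using cos_sum_eq_poly_cos[of N c] by blast
  have "\<bar>poly Q (cos s)\<bar> \<le> K * \<bar>poly Q (cos s)\<bar>"
    using mult_right_mono[OF K abs_ge_zero] by simp
  also have "\<dots> = weighted_error N P K c s"
    using s K by (simp add: weighted_error_def Wweight_def Dresp_def Q abs_mult)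
  also have "\<dots> \<le> E"
    unfolding E_def using s by (intro weighted_error_le_max) auto
  finally have stop: "\<bar>poly Q (cos s)\<bar> \<le> E" .
  have pass: "\<bar>poly (Q - 1) t\<bar> \<le> E" if t: "t \<in> T" for t
  proof -
    obtain \<omega> where "\<omega> \<in> P" "t = cos \<omega>"
      using T(3) t by blast
    then have "\<bar>poly (Q - 1) t\<bar> = weighted_error N P K c \<omega>"
      by (simp add: weighted_error_def Wweight_def Dresp_def Q)
    also have "\<dots> \<le> E"
      unfolding E_def using \<open>\<omega> \<in> P\<close> by (intro weighted_error_le_max) auto
    finally show ?thesis .
  qed
  have "degree (Q - 1) \<le> N"
    using degree_diff_le[of Q N 1] deg by simp
  then have "\<bar>poly Q (cos s) - 1\<bar> \<le> E * (\<Sum>t\<in>T. \<bar>lagrange_basis T t (cos s)\<bar>)"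
    using abs_poly_le_lagrange_bound[OF T(1,2) _ pass] by simp
  with stop have "1 \<le> E + E * (\<Sum>t\<in>T. \<bar>lagrange_basis T t (cos s)\<bar>)"
    using abs_triangle_ineq4[of "poly Q (cos s)" "poly Q (cos s) - 1"] by simp
  then show ?thesis
    by (simp add: E_def distrib_left)
qed

lemma DeltaPres_lower_bound:
  assumes "band_set P" "band_set S" "P \<inter> S = {}"
  obtains \<delta> where "0 < \<delta>" "\<And>K. 1 \<le> K \<Longrightarrow> \<delta> \<le> DeltaPres N P S K"
proof -
  obtain s where s: "s \<in> S" "s \<notin> P"
    using assms band_set_nonempty by blast
  obtain a b where ab: "a < b" "{a..b} \<subseteq> P"
    using assms(1) band_set_contains_interval by blast
  moreover have "P \<subseteq> {0..pi}"
    using assms(1) by (simp add: band_set_def)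
  ultimately obtain T where T: "finite T" "card T = Suc N" "T \<subseteq> cos ` {a..b}"
    using cos_image_contains_card_subset[of a b "Suc N"] by blast
  have T_pass: "T \<subseteq> cos ` P"
    using T(3) ab(2) by blast
  define \<Lambda> where "\<Lambda> = (\<Sum>t\<in>T. \<bar>lagrange_basis T t (cos s)\<bar>)"
  have \<Lambda>: "0 \<le> \<Lambda>"
    unfolding \<Lambda>_def by (intro sum_nonneg) auto
  show ?thesis
  proof
    show "0 < 1 / (1 + \<Lambda>)"
      using \<Lambda> by simp
    fix K :: real assume "1 \<le> K"
    then have "1 / (1 + \<Lambda>) \<le> max_weighted_error N P S K c" for c
      using max_weighted_error_lower_bound[OF _ s T(1,2) T_pass, of K c] \<Lambda>
      unfolding \<Lambda>_def[symmetric] by (simp add: pos_divide_le_eq)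
    then show "1 / (1 + \<Lambda>) \<le> DeltaPres N P S K"
      unfolding DeltaPres_eq_INF_max_weighted_error by (intro cINF_greatest) auto
  qed
qed

lemma DeltaPres_lipschitz:
  assumes ne: "P \<union> S \<noteq> {}" and k: "0 < k"
  shows "(1 / k)-lipschitz_on {k..} (DeltaPres N P S)"
proof -
  have le: "\<bar>DeltaPres N P S y - DeltaPres N P S x\<bar> \<le> (y - x) / k"
    if "k \<le> x" "x \<le> y" for x y
  proof -
    have x: "0 < x"
      using k that by simp
    have "DeltaPres N P S y - DeltaPres N P S x \<le> (y / x - 1) * DeltaPres N P S x"
      using DeltaPres_le_scaled[OF ne x \<open>x \<le> y\<close>] by (simp add: algebra_simps)
    also have "\<dots> \<le> (y / x - 1) * 1"
    proof (intro mult_left_mono)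
      have "DeltaPres N P S x \<le> x / (x + 1)"
        using DeltaPres_le_const_filter[OF ne] x by simp
      also have "\<dots> \<le> 1"
        using x by simp
      finally show "DeltaPres N P S x \<le> 1" .
    qed (use x that in simp)
    also have "\<dots> = (y - x) / x"
      using x by (simp add: field_simps)
    also have "\<dots> \<le> (y - x) / k"
      using k that by (intro divide_left_mono) auto
    finally show ?thesis
      using DeltaPres_mono[OF ne, of x y N] x that by simp
  qed
  show ?thesis
  proof (rule lipschitz_onI)
    fix x y assume "x \<in> {k..}" "y \<in> {k..}"
    then show "dist (DeltaPres N P S x) (DeltaPres N P S y) \<le> 1 / k * dist x y"
      using le[of x y] le[of y x] by (cases "x \<le> y") (auto simp: dist_real_def abs_minus_commute)
  qed (use k in simp)
qed

lemma DeltaP_denominator_pos: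
  fixes a K :: real
  assumes a: "0 < a" and K: "4 * a * (a + 1) \<le> K"
  shows "0 < K^2 + 16 * a^4 - 8 * a^2"
proof -
  have "(4 * a * (a + 1))^2 \<le> K^2"
    using a K by (intro power_mono) auto
  moreover have "(4 * a * (a + 1))^2 + 16 * a^4 - 8 * a^2 = 8 * a^2 * (2 * a + 1)^2"
    by (simp add: power2_eq_square power4_eq_xxxx algebra_simps)
  moreover have "0 < 8 * a^2 * (2 * a + 1)^2"
    using a by simp
  ultimately show ?thesis
    by linarith
qed

lemma DeltaP_threshold:
  assumes "0 < a"
  shows "DeltaP a (4 * a * (a + 1)) = 4 * a * (a + 1) / (4 * a * (a + 1) + 1)"
proof -
  have "(4 * a * (a + 1))^2 + 16 * a^4 - 8 * a^2 = 8 * a^2 * (4 * a * (a + 1) + 1)"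
    by (simp add: power2_eq_square power4_eq_xxxx algebra_simps)
  then have "DeltaP a (4 * a * (a + 1)) = 8 * a^2 * (4 * a * (a + 1)) / (8 * a^2 * (4 * a * (a + 1) + 1))"
    unfolding DeltaP_def by (simp only:)
  also have "\<dots> = 4 * a * (a + 1) / (4 * a * (a + 1) + 1)"
    using assms by (intro mult_divide_mult_cancel_left) simp
  finally show ?thesis .
qed

lemma DeltaP_strict_decreasing:
  assumes a: "0 < a" and xy: "4 * a * (a + 1) \<le> x" "x < y"
  shows "DeltaP a y < DeltaP a x"
proof -
  define c where "c = 16 * a^4 - 8 * a^2"
  have den: "0 < x^2 + c" "0 < y^2 + c"
    using DeltaP_denominator_pos[OF a, of x] DeltaP_denominator_pos[OF a, of y] xy
    by (simp_all add: c_def)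
  have "(4 * a * (a + 1))^2 = c + 8 * a^2 * (4 * a + 3)"
    by (simp add: c_def power2_eq_square power4_eq_xxxx algebra_simps)
  moreover have "0 < 8 * a^2 * (4 * a + 3)"
    using a by simp
  ultimately have "c < (4 * a * (a + 1))^2"
    by linarith
  also have "\<dots> \<le> x * y"
  proof -
    have "0 \<le> 4 * a * (a + 1)"
      using a by simp
    with xy show ?thesis
      unfolding power2_eq_square by (intro mult_mono) auto
  qed
  finally have "0 < (y - x) * (x * y - c)"
    using xy by simp
  then have "y * (x^2 + c) < x * (y^2 + c)"
    by (simp add: power2_eq_square algebra_simps)
  then have "y / (y^2 + c) < x / (x^2 + c)"
    using den by (simp add: field_simps)
  then have "8 * a^2 * (y / (y^2 + c)) < 8 * a^2 * (x / (x^2 + c))"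
    using a by (intro mult_strict_left_mono) auto
  then show ?thesis
    by (simp add: DeltaP_def c_def add_diff_eq)
qed

lemma DeltaP_tendsto_zero: "(DeltaP a \<longlongrightarrow> 0) at_top"
  unfolding DeltaP_def by real_asymp

lemma continuous_on_DeltaP:
  assumes "0 < a"
  shows "continuous_on {4 * a * (a + 1)..} (DeltaP a)"
  unfolding DeltaP_def
  using DeltaP_denominator_pos[OF assms] by (intro continuous_intros) force

lemma unique_crossing:
  fixes f g :: "real \<Rightarrow> real"
  assumes f: "mono_on {a..} f" "continuous_on {a..} f"
    and g: "\<And>x y. a \<le> x \<Longrightarrow> x < y \<Longrightarrow> g y < g x" "continuous_on {a..} g"
    and start: "f a \<le> g a" and later: "a \<le> b" "g b \<le> f b"
  shows "(\<exists>!x. a \<le> x \<and> f x = g x) \<and>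
    (\<forall>x0 x. a \<le> x0 \<and> f x0 = g x0 \<and> a \<le> x \<longrightarrow> (x < x0 \<longrightarrow> f x < g x) \<and> (x > x0 \<longrightarrow> f x > g x))"
proof -
  have signs: "(x < x0 \<longrightarrow> f x < g x) \<and> (x > x0 \<longrightarrow> f x > g x)"
    if x0: "a \<le> x0" "f x0 = g x0" and x: "a \<le> x" for x0 x
  proof (intro conjI impI)
    assume "x < x0"
    then have "f x \<le> f x0" "g x0 < g x"
      using mono_onD[OF f(1), of x x0] g(1)[of x x0] x0 x by auto
    with x0 show "f x < g x"
      by simp
  next
    assume "x > x0"
    then have "f x0 \<le> f x" "g x < g x0"
      using mono_onD[OF f(1), of x0 x] g(1)[of x0 x] x0 x by auto
    with x0 show "f x > g x"
      by simp
  qed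
  have "continuous_on {a..b} (\<lambda>x. f x - g x)"
    by (intro continuous_on_diff continuous_on_subset[OF f(2)] continuous_on_subset[OF g(2)]) auto
  then obtain x0 where "a \<le> x0" "f x0 = g x0"
    using IVT'[of "\<lambda>x. f x - g x" a 0 b] start later by auto
  moreover have "x = x0" if "a \<le> x" "f x = g x" for x
    using signs[OF \<open>a \<le> x0\<close> \<open>f x0 = g x0\<close> \<open>a \<le> x\<close>] that
    by (cases x x0 rule: linorder_cases) auto
  ultimately show ?thesis
    using signs by blast
qed

theorem mainTheorem3:
  fixes N :: nat and Kdes :: real and \<Omega>P \<Omega>S :: "real set"
  assumes "N \<ge> 1" and "Kdes > 0"
    and "band_set \<Omega>P" and "band_set \<Omega>S" and "\<Omega>P \<inter> \<Omega>S = {}"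
  shows "(\<exists>!K. K \<ge> 4 * Kdes * (Kdes + 1) \<and> DeltaPres N \<Omega>P \<Omega>S K = DeltaP Kdes K) \<and>
    (\<forall>K0 K. K0 \<ge> 4 * Kdes * (Kdes + 1) \<and> DeltaPres N \<Omega>P \<Omega>S K0 = DeltaP Kdes K0
        \<and> K \<ge> 4 * Kdes * (Kdes + 1) \<longrightarrow>
       (K < K0 \<longrightarrow> DeltaPres N \<Omega>P \<Omega>S K < DeltaP Kdes K) \<and>
       (K > K0 \<longrightarrow> DeltaPres N \<Omega>P \<Omega>S K > DeltaP Kdes K))"
proof -
  let ?K1 = "4 * Kdes * (Kdes + 1)"
  have K1: "0 < ?K1"
    using assms(2) by simp
  have ne: "\<Omega>P \<union> \<Omega>S \<noteq> {}"
    using band_set_nonempty[OF assms(3)] by blast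
  obtain \<delta> where \<delta>: "0 < \<delta>" "\<And>K. 1 \<le> K \<Longrightarrow> \<delta> \<le> DeltaPres N \<Omega>P \<Omega>S K"
    using DeltaPres_lower_bound[OF assms(3-5)] by blast
  have "\<forall>\<^sub>F K in at_top. DeltaP Kdes K < \<delta> \<and> max ?K1 1 \<le> K"
    using order_tendstoD(2)[OF DeltaP_tendsto_zero \<delta>(1)] eventually_ge_at_top by (rule eventually_conj)
  then obtain M where "DeltaP Kdes M < \<delta>" "?K1 \<le> M" "1 \<le> M"
    using eventually_happens'[OF trivial_limit_at_top_linorder] by auto
  with \<delta>(2)[of M] have M: "?K1 \<le> M" "DeltaP Kdes M \<le> DeltaPres N \<Omega>P \<Omega>S M"
    by auto
  have mono: "mono_on {?K1..} (DeltaPres N \<Omega>P \<Omega>S)"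
    using DeltaPres_mono[OF ne] K1 by (intro mono_onI) auto
  have cont: "continuous_on {?K1..} (DeltaPres N \<Omega>P \<Omega>S)"
    using lipschitz_on_continuous_on[OF DeltaPres_lipschitz[OF ne K1]] .
  have start: "DeltaPres N \<Omega>P \<Omega>S ?K1 \<le> DeltaP Kdes ?K1"
    using DeltaPres_le_const_filter[OF ne, of ?K1 N] K1 DeltaP_threshold[OF assms(2)] by simp
  show ?thesis
    using unique_crossing[OF mono cont DeltaP_strict_decreasing[OF assms(2)]
        continuous_on_DeltaP[OF assms(2)] start M] .
qed

end
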